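(* For all positive integers $n$ and $K\ge 2$, $$\min_{n=n_1\ge n_2\ge\cdots\ge n_{K-1}\ge n_K\ge1}\left(\sum_{k=1}^{K-1}\frac{n\cdot n_k}{\sqrt{n_{k+1}}}+n_{K-1}\cdot n_K\right)=O(K)\cdot n^{1.5+\frac{1}{6(2^{K-1}-1)}},$$ where the minimum is over real numbers $n_1,\dots,n_K$ and the $O(\cdot)$ hides an absolute constant. *)

theory Defs
  imports Complex_Main
begin

definition feasible_chain :: "nat \<Rightarrow> nat \<Rightarrow> (nat \<Rightarrow> real) \<Rightarrow> bool" where
  "feasible_chain n K x \<longleftrightarrow>
     x 1 = real n \<and> (\<forall>k\<in>{1..<K}. x (Suc k) \<le> x k) \<and> x K \<ge> 1"

definition chain_cost :: "nat \<Rightarrow> nat \<Rightarrow> (nat \<Rightarrow> real) \<Rightarrow> real" where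
  "chain_cost n K x =
     (\<Sum>k=1..K-1. real n * x k / sqrt (x (Suc k))) + x (K-1) * x K"

end

theory Submission
  imports Defs
begin

text \<open>Take the chain \<open>n_k = n powr (1 - (2^k - 2) e)\<close>, so \<open>n_1 = n\<close>. Its exponents make
  every term \<open>n n_k / sqrt n_(k+1)\<close> equal to \<open>n powr (3/2 + e)\<close>, independently of \<open>k\<close>, and
  \<open>e = 1 / (6 (2^(K-1) - 1))\<close> is exactly the value for which the last term \<open>n_(K-1) n_K\<close>
  equals it too, while \<open>n_K = n powr (2/3) \<ge> 1\<close>. This chain costs \<open>K n powr (3/2 + e)\<close>,
  so the constant 1 works.\<close>

lemma feasible_chain_last_le:
  assumes "feasible_chain n K x" "1 \<le> k" "k \<le> K"
  shows "x K \<le> x k"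
  using assms(3,2)
proof (induction k rule: inc_induct)
  case base
  show ?case by simp
next
  case (step m)
  then have "x (Suc m) \<le> x m" using assms(1) unfolding feasible_chain_def by auto
  with step show ?case by simp
qed

lemma feasible_chain_ge_one:
  assumes "feasible_chain n K x" "1 \<le> k" "k \<le> K"
  shows "1 \<le> x k"
  using feasible_chain_last_le[OF assms] assms(1) unfolding feasible_chain_def by linarith

lemma chain_cost_nonneg:
  assumes "feasible_chain n K x" "2 \<le> K"
  shows "0 \<le> chain_cost n K x"
proof -
  have "0 \<le> real n * x k / sqrt (x (Suc k))" if "k \<in> {1..K-1}" for k
  proof -
    have "1 \<le> x k" "1 \<le> x (Suc k)"
      using that feasible_chain_ge_one[OF assms(1)] by auto
    then show ?thesis by simp
  qed
  moreover have "1 \<le> x (K-1)" "1 \<le> x K"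
    using feasible_chain_ge_one[OF assms(1)] assms(2) by auto
  ultimately show ?thesis
    unfolding chain_cost_def by (intro add_nonneg_nonneg sum_nonneg mult_nonneg_nonneg) auto
qed

lemma Inf_chain_cost_le:
  assumes "feasible_chain n K x" "2 \<le> K"
  shows "Inf {chain_cost n K y | y. feasible_chain n K y} \<le> chain_cost n K x"
proof (rule cInf_lower)
  show "bdd_below {chain_cost n K y | y. feasible_chain n K y}"
    using chain_cost_nonneg assms(2) by (intro bdd_belowI[of _ 0]) auto
qed (use assms(1) in auto)

definition doubling_chain :: "nat \<Rightarrow> real \<Rightarrow> nat \<Rightarrow> real" where
  "doubling_chain n e k = real n powr (1 - (2 ^ k - 2) * e)"

lemma doubling_chain_term:
  assumes "1 \<le> n"
  shows "real n * doubling_chain n e k / sqrt (doubling_chain n e (Suc k)) = real n powr (3/2 + e)"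
proof -
  have n: "0 < real n" using assms by simp
  have powr_term: "real n * real n powr a / sqrt (real n powr b) = real n powr (1 + a - b / 2)"
    for a b :: real
  proof -
    have "sqrt (real n powr b) = real n powr (b / 2)"
      using n by (simp add: powr_half_sqrt[symmetric] powr_powr)
    then show ?thesis using n by (simp add: powr_diff powr_add)
  qed
  have "1 + (1 - (2 ^ k - 2) * e) - (1 - (2 ^ Suc k - 2) * e) / 2 = 3/2 + e"
    by (simp add: field_simps)
  then show ?thesis
    unfolding doubling_chain_def powr_term by simp
qed

lemma doubling_chain_feasible:
  assumes "1 \<le> n" "0 \<le> e" "(2 ^ K - 2) * e \<le> 1"
  shows "feasible_chain n K (doubling_chain n e)"
  unfolding feasible_chain_def
proof (intro conjI ballI)
  show "doubling_chain n e 1 = real n"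
    using assms(1) by (simp add: doubling_chain_def)
  have n: "1 \<le> real n" using assms(1) by simp
  fix k assume "k \<in> {1..<K}"
  have "(2::real) ^ k * e \<le> 2 ^ Suc k * e" using assms(2) by simp
  then show "doubling_chain n e (Suc k) \<le> doubling_chain n e k"
    unfolding doubling_chain_def by (intro powr_mono n) (simp add: algebra_simps)
next
  show "1 \<le> doubling_chain n e K"
    using assms by (simp add: doubling_chain_def ge_one_powr_ge_zero)
qed

lemma doubling_chain_last_term:
  assumes "1 \<le> n" "1 \<le> K" "6 * (2 ^ (K-1) - 1) * e = 1"
  shows "doubling_chain n e (K-1) * doubling_chain n e K = real n powr (3/2 + e)"
proof -
  have "(2::real) ^ K = 2 * 2 ^ (K-1)"
    using assms(2) by (cases K) auto
  then have "(1 - (2 ^ (K-1) - 2) * e) + (1 - (2 ^ K - 2) * e) = 3/2 + e"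
    using assms(3) by (simp add: algebra_simps)
  then show ?thesis
    using assms(1) unfolding doubling_chain_def by (simp add: powr_add[symmetric])
qed

lemma chain_cost_doubling_chain:
  assumes "1 \<le> n" "1 \<le> K" "6 * (2 ^ (K-1) - 1) * e = 1"
  shows "chain_cost n K (doubling_chain n e) = real K * real n powr (3/2 + e)"
proof -
  have "(\<Sum>k=1..K-1. real n * doubling_chain n e k / sqrt (doubling_chain n e (Suc k)))
      = real (K-1) * real n powr (3/2 + e)"
    using doubling_chain_term[OF assms(1)] by simp
  then show ?thesis
    unfolding chain_cost_def doubling_chain_last_term[OF assms]
    using assms(2) by (simp add: algebra_simps of_nat_diff)
qed

theorem claim3p6:
  shows "\<exists>C::real. \<forall>n K::nat. n \<ge> 1 \<longrightarrow> K \<ge> 2 \<longrightarrow>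
    Inf {chain_cost n K x | x. feasible_chain n K x}
      \<le> C * real K * real n powr (3/2 + 1 / (6 * (2 ^ (K - 1) - 1)))"
proof (intro exI[of _ 1] allI impI)
  fix n K :: nat
  assume n: "n \<ge> 1" and K: "K \<ge> 2"
  define e :: real where "e = 1 / (6 * (2 ^ (K - 1) - 1))"
  have "(2::real) ^ 1 \<le> 2 ^ (K - 1)"
    using K by (intro power_increasing) auto
  then have balance: "6 * (2 ^ (K-1) - 1) * e = 1" and "0 \<le> e"
    unfolding e_def by simp_all
  moreover have "(2::real) ^ K = 2 * 2 ^ (K-1)"
    using K by (cases K) auto
  ultimately have "(2 ^ K - 2) * e \<le> 1" by (simp add: algebra_simps)
  with n \<open>0 \<le> e\<close> have "feasible_chain n K (doubling_chain n e)"
    by (rule doubling_chain_feasible)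
  then have "Inf {chain_cost n K x | x. feasible_chain n K x} \<le> chain_cost n K (doubling_chain n e)"
    using K by (rule Inf_chain_cost_le)
  also have "\<dots> = real K * real n powr (3/2 + e)"
    using n K balance by (intro chain_cost_doubling_chain) auto
  finally show "Inf {chain_cost n K x | x. feasible_chain n K x}
      \<le> 1 * real K * real n powr (3/2 + 1 / (6 * (2 ^ (K - 1) - 1)))"
    unfolding e_def by simp
qed

end
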